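(* For every integer $n\ge5$, the polynomial $a_n$ lies in $\mathbb{Z}[T_3,\dots,T_{n-1}]$, is homogeneous of degree $2$, and the quadratic form it defines on $\mathbb{R}^{n-3}$ (identifying the coordinates with $T_3,\dots,T_{n-1}$) is non-degenerate.
   Context: Let $T_1,T_2,\dots$ be indeterminates. Define linear operators $L,H$ on monomials (constants sent to $0$): $L(T_{\alpha_1}\cdots T_{\alpha_r})=\sum_{1\le i<j\le r}T_{\alpha_1}\cdots T_{\alpha_i+1}\cdots T_{\alpha_j+1}\cdots T_{\alpha_r}$, $H(T_{\alpha_1}\cdots T_{\alpha_r})=-\frac12\sum_{k=1}^{r}\sum_{l=1}^{\alpha_k-1}\binom{\alpha_k}{l}T_{1+l}T_{1+\alpha_k-l}\prod_{i\ne k}T_{\alpha_i}$. For $n\ge2$ let $A_n=-\sum_{k=1}^{n-1}\binom{n}{k}T_{1+k}T_{1+n-k}T_n$; set $R_2=0$, $R_{n+1}=A_n+L(R_n)+H(R_n)$. For $n\ge3$ write $R_{n+1}=\sum_{j\ge0}P_jT_n^j$ with the $P_j$ not involving $T_n$, and set $a_n:=P_1$. *)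

theory Defs
  imports Main "HOL-Library.Multiset" "HOL-Library.Poly_Mapping" Complex_Main
begin

text \<open>Polynomials in the indeterminates T_1, T_2, ... with rational coefficients.
  A monomial T_{a_1} ... T_{a_r} is represented by the multiset of its indices
  {#a_1,...,a_r#}; a polynomial is a finitely supported map from monomials to
  coefficients.\<close>

type_synonym tpoly = "nat multiset \<Rightarrow>\<^sub>0 rat"

definition lin_ext :: "(nat multiset \<Rightarrow> rat \<Rightarrow> tpoly) \<Rightarrow> tpoly \<Rightarrow> tpoly" where
  "lin_ext f p = (\<Sum>m\<in>Poly_Mapping.keys p. f m (Poly_Mapping.lookup p m))"

definition L_mono :: "nat multiset \<Rightarrow> rat \<Rightarrow> tpoly" where
  "L_mono m c = (let xs = sorted_list_of_multiset m in
     (\<Sum>j<length xs. \<Sum>i<j.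
        Poly_Mapping.single (mset (xs[i := xs!i + 1, j := xs!j + 1])) c))"

definition H_mono :: "nat multiset \<Rightarrow> rat \<Rightarrow> tpoly" where
  "H_mono m c = (let xs = sorted_list_of_multiset m in
     (\<Sum>k<length xs. \<Sum>l\<in>{1..<xs!k}.
        Poly_Mapping.single (m - {#xs!k#} + {#1 + l, 1 + xs!k - l#})
          (- (1/2) * of_nat (xs!k choose l) * c)))"

definition L_op :: "tpoly \<Rightarrow> tpoly" where "L_op = lin_ext L_mono"
definition H_op :: "tpoly \<Rightarrow> tpoly" where "H_op = lin_ext H_mono"

definition A_poly :: "nat \<Rightarrow> tpoly" where
  "A_poly n = (\<Sum>k\<in>{1..n-1}.
      Poly_Mapping.single {#1 + k, 1 + n - k, n#} (- of_nat (n choose k)))"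

primrec R_poly :: "nat \<Rightarrow> tpoly" where
  "R_poly 0 = 0"
| "R_poly (Suc n) = (if n < 2 then 0 else A_poly n + L_op (R_poly n) + H_op (R_poly n))"

text \<open>a_n = P_1, the coefficient of T_n^1 in R_{n+1} viewed as a polynomial in T_n.\<close>
definition a_poly :: "nat \<Rightarrow> tpoly" where
  "a_poly n = (let p = R_poly (Suc n) in
     (\<Sum>m\<in>{m\<in>Poly_Mapping.keys p. count m n = 1}. Poly_Mapping.single (m - {#n#}) (Poly_Mapping.lookup p m)))"

definition eval_tpoly :: "tpoly \<Rightarrow> (nat \<Rightarrow> real) \<Rightarrow> real" where
  "eval_tpoly p x = (\<Sum>m\<in>Poly_Mapping.keys p. of_rat (Poly_Mapping.lookup p m) * (\<Prod>i\<in>#m. x i))"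

definition polar_form :: "tpoly \<Rightarrow> (nat \<Rightarrow> real) \<Rightarrow> (nat \<Rightarrow> real) \<Rightarrow> real" where
  "polar_form p x y = (eval_tpoly p (\<lambda>i. x i + y i) - eval_tpoly p x - eval_tpoly p y) / 2"

text \<open>Non-degeneracy of the quadratic form of p on the real space with coordinates
  indexed by I (vectors are functions vanishing outside I): the radical is trivial.\<close>
definition nondegenerate_on :: "nat set \<Rightarrow> tpoly \<Rightarrow> bool" where
  "nondegenerate_on I p \<longleftrightarrow>
     (\<forall>x. (\<forall>i. i \<notin> I \<longrightarrow> x i = 0) \<longrightarrow>
        (\<forall>y. (\<forall>i. i \<notin> I \<longrightarrow> y i = 0) \<longrightarrow> polar_form p x y = 0) \<longrightarrow>
        (\<forall>i. x i = 0))"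

end

theory Submission
  imports Defs
begin

(* Every monomial of R_m has index sum 2m, at least three factors, and each index i satisfies
   i + (number of factors) \<le> m + 2: this holds for A_n, and L and H preserve it when m grows by
   one.  Hence a monomial of R_(n+1) containing T_n is cubic, so a_n is a quadratic form whose
   monomials are T_a T_(n+2-a) with 3 \<le> a \<le> n - 1.  The cubic coefficients of every R_m are
   nonpositive integers (L preserves the number of factors and has nonnegative integer
   coefficients, H raises it), and A_n contributes -binom(n, a-1) to T_n T_a T_(n+2-a).  So a_n is
   an integral form supported on the full antidiagonal with negative coefficients there, which
   makes it nondegenerate. *)

lemma keys_sum_single:
  "Poly_Mapping.keys (\<Sum>x\<in>X. Poly_Mapping.single (g x) (c x)) \<subseteq> g ` X"
  using keys_sum[of "\<lambda>x. Poly_Mapping.single (g x) (c x)" X] by (auto split: if_splits)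

lemma keys_lin_ext:
  "M \<in> Poly_Mapping.keys (lin_ext f p) \<Longrightarrow>
     \<exists>m\<in>Poly_Mapping.keys p. M \<in> Poly_Mapping.keys (f m (Poly_Mapping.lookup p m))"
  unfolding lin_ext_def by (blast dest: subsetD[OF keys_sum])

lemma lookup_lin_ext:
  "Poly_Mapping.lookup (lin_ext f p) M =
     (\<Sum>m\<in>Poly_Mapping.keys p. Poly_Mapping.lookup (f m (Poly_Mapping.lookup p m)) M)"
  unfolding lin_ext_def by (rule lookup_sum)

lemma mset_update_add:
  "i < length xs \<Longrightarrow> mset (xs[i := v]) + {#xs ! i#} = mset xs + {#v#}"
  by (simp add: mset_update nth_mem_mset)

(* L raises two distinct factors T_a, T_b of the monomial to T_(a+1), T_(b+1); stating this
   additively avoids multiset subtraction. *)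
lemma keys_L_mono:
  assumes "M' \<in> Poly_Mapping.keys (L_mono M c)"
  obtains a b where "a \<in># M" "b \<in># M" "M' + {#a, b#} = M + {#a + 1, b + 1#}"
proof -
  define xs where "xs = sorted_list_of_multiset M"
  from assms obtain i j where ij: "i < j" "j < length xs"
    and M': "M' = mset (xs[i := xs ! i + 1, j := xs ! j + 1])"
    unfolding L_mono_def Let_def xs_def[symmetric]
    by (auto dest!: subsetD[OF keys_sum] subsetD[OF keys_sum_single])
  define ys where "ys = xs[i := xs ! i + 1]"
  have "M' + {#xs ! i, xs ! j#} = (M' + {#xs ! j#}) + {#xs ! i#}"
    by simp
  also have "M' + {#xs ! j#} = mset ys + {#xs ! j + 1#}"
    using mset_update_add[of j ys] ij by (simp add: M' ys_def)
  also have "mset ys + {#xs ! j + 1#} + {#xs ! i#} = (mset ys + {#xs ! i#}) + {#xs ! j + 1#}"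
    by simp
  also have "mset ys + {#xs ! i#} = M + {#xs ! i + 1#}"
    using mset_update_add[of i xs] ij by (simp add: ys_def xs_def)
  finally have "M' + {#xs ! i, xs ! j#} = M + {#xs ! i + 1, xs ! j + 1#}"
    by simp
  moreover have "xs ! i \<in># M" "xs ! j \<in># M"
    using ij nth_mem_mset[of _ xs] by (simp_all add: xs_def)
  ultimately show ?thesis by (rule that[rotated 2])
qed

lemma keys_H_mono:
  assumes "M' \<in> Poly_Mapping.keys (H_mono M c)"
  obtains a l where "a \<in># M" "1 \<le> l" "l < a" "M' = M - {#a#} + {#1 + l, 1 + a - l#}"
proof -
  define xs where "xs = sorted_list_of_multiset M"
  define f where "f k l = Poly_Mapping.single (M - {#xs ! k#} + {#1 + l, 1 + xs ! k - l#})
    (- (1/2) * of_nat (xs ! k choose l) * c)" for k l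
  have "M' \<in> Poly_Mapping.keys (\<Sum>k<length xs. \<Sum>l\<in>{1..<xs ! k}. f k l)"
    using assms unfolding H_mono_def Let_def xs_def[symmetric] f_def .
  then obtain k where k: "k < length xs" and "M' \<in> Poly_Mapping.keys (\<Sum>l\<in>{1..<xs ! k}. f k l)"
    by (auto dest: subsetD[OF keys_sum])
  from this(2) have "M' \<in> (\<lambda>l. M - {#xs ! k#} + {#1 + l, 1 + xs ! k - l#}) ` {1..<xs ! k}"
    unfolding f_def by (rule subsetD[OF keys_sum_single])
  then obtain l where l: "1 \<le> l" "l < xs ! k"
    and M': "M' = M - {#xs ! k#} + {#1 + l, 1 + xs ! k - l#}"
    by auto
  have "xs ! k \<in># M"
    using k nth_mem_mset[of k xs] by (simp add: xs_def)
  from that[OF this l M'] show ?thesis .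
qed

definition admissible_monomial :: "nat \<Rightarrow> nat multiset \<Rightarrow> bool" where
  "admissible_monomial m M \<longleftrightarrow>
     3 \<le> size M \<and> (\<forall>i\<in>#M. 2 \<le> i \<and> i + size M \<le> m + 2) \<and> sum_mset M = 2 * m"

lemma admissible_monomial_L_mono:
  assumes "admissible_monomial m M" "M' \<in> Poly_Mapping.keys (L_mono M c)"
  shows "admissible_monomial (Suc m) M'"
proof -
  obtain a b where ab: "a \<in># M" "b \<in># M" and M': "M' + {#a, b#} = M + {#a + 1, b + 1#}"
    using keys_L_mono[OF assms(2)] .
  have size: "size M' = size M" and sum: "sum_mset M' = sum_mset M + 2"
    using arg_cong[OF M', of size] arg_cong[OF M', of sum_mset] by simp_all
  have "2 \<le> i \<and> i + size M' \<le> Suc m + 2" if "i \<in># M'" for i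
  proof -
    have "i \<in># M + {#a + 1, b + 1#}" using that M' by (metis union_iff)
    then obtain j where "j \<in># M" "j \<le> i" "i \<le> j + 1" using ab by auto
    then show ?thesis using assms(1) size unfolding admissible_monomial_def by fastforce
  qed
  then show ?thesis using assms(1) size sum unfolding admissible_monomial_def by simp
qed

lemma admissible_monomial_H_mono:
  assumes "admissible_monomial m M" "M' \<in> Poly_Mapping.keys (H_mono M c)"
  shows "admissible_monomial (Suc m) M'"
proof -
  obtain a l where a: "a \<in># M" and l: "1 \<le> l" "l < a"
    and M': "M' = M - {#a#} + {#1 + l, 1 + a - l#}"
    using keys_H_mono[OF assms(2)] .
  define N where "N = M - {#a#}"
  have M: "M = add_mset a N" using a by (simp add: N_def)
  have size: "size M' = size M + 1" and sum: "sum_mset M' = sum_mset M + 2"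
    using l by (simp_all add: M' M N_def[symmetric])
  have "2 \<le> i \<and> i + size M' \<le> Suc m + 2" if "i \<in># M'" for i
  proof -
    have bound: "2 \<le> j \<and> j + size M \<le> m + 2" if "j \<in># M" for j
      using assms(1) that unfolding admissible_monomial_def by blast
    have "i \<in># M \<or> i = 1 + l \<or> i = 1 + a - l" using that M' by (auto dest: in_diffD)
    then show ?thesis
    proof (elim disjE)
      assume "i \<in># M"
      then show ?thesis using bound[of i] size by simp
    next
      assume "i = 1 + l"
      then show ?thesis using bound[OF a] size l by simp
    next
      assume "i = 1 + a - l"
      then show ?thesis using bound[OF a] size l by simp linarith
    qed
  qed
  then show ?thesis using assms(1) size sum unfolding admissible_monomial_def by simp
qed

lemma admissible_monomial_A_poly:
  assumes "2 \<le> n" "M \<in> Poly_Mapping.keys (A_poly n)"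
  shows "admissible_monomial (Suc n) M"
proof -
  obtain k where k: "1 \<le> k" "k \<le> n - 1" and M: "M = {#1 + k, 1 + n - k, n#}"
    using subsetD[OF keys_sum_single assms(2)[unfolded A_poly_def]] by auto
  have "1 + k \<le> n" "2 \<le> 1 + n - k" "1 + n - k \<le> n" using k assms(1) by auto
  then show ?thesis by (simp add: admissible_monomial_def M)
qed

lemma admissible_monomial_R_poly:
  "M \<in> Poly_Mapping.keys (R_poly m) \<Longrightarrow> admissible_monomial m M"
proof (induction m arbitrary: M)
  case 0
  then show ?case by simp
next
  case (Suc n)
  show ?case
  proof (cases "n < 2")
    case True
    with Suc.prems show ?thesis by simp
  next
    case False
    then have "M \<in> Poly_Mapping.keys (A_poly n) \<union> Poly_Mapping.keys (L_op (R_poly n))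
        \<union> Poly_Mapping.keys (H_op (R_poly n))"
      using Suc.prems by (auto dest!: subsetD[OF keys_add])
    then show ?thesis
    proof (elim UnE)
      assume "M \<in> Poly_Mapping.keys (A_poly n)"
      with False show ?thesis by (simp add: admissible_monomial_A_poly)
    next
      assume "M \<in> Poly_Mapping.keys (L_op (R_poly n))"
      then show ?thesis
        unfolding L_op_def using Suc.IH admissible_monomial_L_mono by (blast dest: keys_lin_ext)
    next
      assume "M \<in> Poly_Mapping.keys (H_op (R_poly n))"
      then show ?thesis
        unfolding H_op_def using Suc.IH admissible_monomial_H_mono by (blast dest: keys_lin_ext)
    qed
  qed
qed

definition nonpos_int :: "rat \<Rightarrow> bool" where
  "nonpos_int q \<longleftrightarrow> q \<in> \<int> \<and> q \<le> 0"

lemma nonpos_int_sum: "(\<And>x. x \<in> X \<Longrightarrow> nonpos_int (f x)) \<Longrightarrow> nonpos_int (sum f X)"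
  unfolding nonpos_int_def by (auto intro: sum_nonpos Ints_sum)

lemma nonpos_int_lookup_single: "nonpos_int c \<Longrightarrow> nonpos_int (Poly_Mapping.lookup (Poly_Mapping.single k c) M)"
  by (simp add: lookup_single when_def nonpos_int_def)

lemma nonpos_int_lookup_L_mono: "nonpos_int c \<Longrightarrow> nonpos_int (Poly_Mapping.lookup (L_mono m c) M)"
  unfolding L_mono_def Let_def lookup_sum by (intro nonpos_int_sum nonpos_int_lookup_single)

lemma nonpos_int_lookup_A_poly: "nonpos_int (Poly_Mapping.lookup (A_poly n) M)"
  unfolding A_poly_def lookup_sum
  by (intro nonpos_int_sum nonpos_int_lookup_single) (simp add: nonpos_int_def)

lemma nonpos_int_lookup_L_op:
  assumes "\<And>M'. size M' = size M \<Longrightarrow> nonpos_int (Poly_Mapping.lookup p M')"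
  shows "nonpos_int (Poly_Mapping.lookup (L_op p) M)"
  unfolding L_op_def lookup_lin_ext
proof (rule nonpos_int_sum)
  fix m
  show "nonpos_int (Poly_Mapping.lookup (L_mono m (Poly_Mapping.lookup p m)) M)"
  proof (cases "size m = size M")
    case True
    then show ?thesis using assms nonpos_int_lookup_L_mono by simp
  next
    case False
    have "M \<notin> Poly_Mapping.keys (L_mono m (Poly_Mapping.lookup p m))"
    proof
      assume "M \<in> Poly_Mapping.keys (L_mono m (Poly_Mapping.lookup p m))"
      then obtain a b where "M + {#a, b#} = m + {#a + 1, b + 1#}" by (rule keys_L_mono)
      from arg_cong[OF this, of size] False show False by simp
    qed
    then show ?thesis by (simp add: in_keys_iff nonpos_int_def)
  qed
qed

lemma lookup_H_op_eq_0:
  assumes "\<And>m. m \<in> Poly_Mapping.keys p \<Longrightarrow> size M \<le> size m"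
  shows "Poly_Mapping.lookup (H_op p) M = 0"
  unfolding H_op_def lookup_lin_ext
proof (rule sum.neutral, rule ballI)
  fix m assume m: "m \<in> Poly_Mapping.keys p"
  have "M \<notin> Poly_Mapping.keys (H_mono m (Poly_Mapping.lookup p m))"
  proof
    assume "M \<in> Poly_Mapping.keys (H_mono m (Poly_Mapping.lookup p m))"
    then obtain a l where "a \<in># m" "M = m - {#a#} + {#1 + l, 1 + a - l#}"
      by (rule keys_H_mono)
    then have "size M = size m + 1" by (auto dest!: multi_member_split)
    with assms[OF m] show False by simp
  qed
  then show "Poly_Mapping.lookup (H_mono m (Poly_Mapping.lookup p m)) M = 0"
    by (simp add: in_keys_iff)
qed

lemma lookup_R_poly_Suc_cubic:
  assumes "2 \<le> n" "size M = 3"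
  shows "Poly_Mapping.lookup (R_poly (Suc n)) M
       = Poly_Mapping.lookup (A_poly n) M + Poly_Mapping.lookup (L_op (R_poly n)) M"
proof -
  have "Poly_Mapping.lookup (H_op (R_poly n)) M = 0"
    using assms(2) admissible_monomial_R_poly
    by (intro lookup_H_op_eq_0) (simp add: admissible_monomial_def)
  then show ?thesis using assms(1) by (simp add: lookup_add)
qed

lemma nonpos_int_lookup_R_poly_cubic:
  "size M = 3 \<Longrightarrow> nonpos_int (Poly_Mapping.lookup (R_poly m) M)"
proof (induction m arbitrary: M)
  case 0
  then show ?case by (simp add: nonpos_int_def)
next
  case (Suc n)
  show ?case
  proof (cases "n < 2")
    case True
    then show ?thesis by (simp add: nonpos_int_def)
  next
    case False
    have R: "Poly_Mapping.lookup (R_poly (Suc n)) M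
       = Poly_Mapping.lookup (A_poly n) M + Poly_Mapping.lookup (L_op (R_poly n)) M"
      using False Suc.prems by (intro lookup_R_poly_Suc_cubic) simp_all
    have "nonpos_int (Poly_Mapping.lookup (L_op (R_poly n)) M)"
      using Suc by (intro nonpos_int_lookup_L_op) simp
    then show ?thesis
      using nonpos_int_lookup_A_poly[of n M] unfolding R nonpos_int_def by simp
  qed
qed

lemma lookup_a_poly:
  "Poly_Mapping.lookup (a_poly n) M =
     (if count M n = 0 then Poly_Mapping.lookup (R_poly (Suc n)) (add_mset n M) else 0)"
proof -
  define p where "p = R_poly (Suc n)"
  define S where "S = {m \<in> Poly_Mapping.keys p. count m n = 1}"
  have a_sum: "Poly_Mapping.lookup (a_poly n) M
      = (\<Sum>m\<in>S. if m - {#n#} = M then Poly_Mapping.lookup p m else 0)"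
    unfolding a_poly_def Let_def p_def[symmetric] S_def[symmetric] lookup_sum lookup_single when_def
    by (simp add: eq_commute)
  have remove_n: "m - {#n#} = M \<longleftrightarrow> count M n = 0 \<and> m = add_mset n M" if "m \<in> S" for m
  proof -
    have "count m n = 1" using that by (simp add: S_def)
    then have "m = add_mset n (m - {#n#})" "count (m - {#n#}) n = 0"
      by (simp_all add: insert_DiffM count_greater_zero_iff[symmetric])
    then show ?thesis by auto
  qed
  show ?thesis
  proof (cases "count M n = 0")
    case True
    have "Poly_Mapping.lookup (a_poly n) M = (\<Sum>m\<in>S. if m = add_mset n M then Poly_Mapping.lookup p m else 0)"
      unfolding a_sum using remove_n True by (intro sum.cong) simp_all
    also have "\<dots> = Poly_Mapping.lookup p (add_mset n M)"
      using True by (simp add: S_def in_keys_iff)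
    finally show ?thesis using True by (simp add: p_def)
  next
    case False
    have "(\<Sum>m\<in>S. if m - {#n#} = M then Poly_Mapping.lookup p m else 0) = 0"
      using remove_n False by (intro sum.neutral) auto
    then show ?thesis unfolding if_not_P[OF False] a_sum .
  qed
qed

lemma size_2_mset:
  assumes "size M = 2"
  shows "\<exists>a b. M = {#a, b#}"
proof -
  obtain a N where "M = add_mset a N"
    using size_eq_Suc_imp_eq_union[of M 1] assms by auto
  moreover obtain b where "N = {#b#}"
    using size_1_singleton_mset[of N] assms calculation by auto
  ultimately show ?thesis by blast
qed

lemma keys_a_poly:
  assumes "M \<in> Poly_Mapping.keys (a_poly n)"
  obtains a where "3 \<le> a" "a \<le> n - 1" "M = {#a, n + 2 - a#}"
proof -
  have n: "count M n = 0" and "add_mset n M \<in> Poly_Mapping.keys (R_poly (Suc n))"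
    using assms by (auto simp: in_keys_iff lookup_a_poly split: if_splits)
  from this(2) have adm: "admissible_monomial (Suc n) (add_mset n M)"
    by (rule admissible_monomial_R_poly)
  then have "size M = 2" by (simp add: admissible_monomial_def)
  then obtain a b where M: "M = {#a, b#}" using size_2_mset by blast
  have "a \<noteq> n" "b \<noteq> n" using n by (auto simp: M split: if_splits)
  moreover have "2 \<le> a" "a \<le> n" "2 \<le> b" "b \<le> n" "a + b = n + 2"
    using adm by (simp_all add: admissible_monomial_def M)
  ultimately show ?thesis by (intro that[of a]) (simp_all add: M)
qed

lemma lookup_a_poly_Ints: "Poly_Mapping.lookup (a_poly n) M \<in> \<int>"
proof (cases "M \<in> Poly_Mapping.keys (a_poly n)")
  case True
  then obtain a where "M = {#a, n + 2 - a#}" by (rule keys_a_poly)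
  then have "nonpos_int (Poly_Mapping.lookup (R_poly (Suc n)) (add_mset n M))"
    by (intro nonpos_int_lookup_R_poly_cubic) simp
  then show ?thesis by (simp add: lookup_a_poly nonpos_int_def)
next
  case False
  then show ?thesis by (simp add: in_keys_iff)
qed

lemma lookup_A_poly_neg:
  assumes "1 \<le> k" "k \<le> n - 1"
  shows "Poly_Mapping.lookup (A_poly n) {#1 + k, 1 + n - k, n#} < 0"
proof -
  define f where "f j = (if {#1 + j, 1 + n - j, n#} = {#1 + k, 1 + n - k, n#}
    then - rat_of_nat (n choose j) else 0)" for j
  have k: "k \<in> {1..n - 1}" using assms by simp
  have "Poly_Mapping.lookup (A_poly n) {#1 + k, 1 + n - k, n#} = (\<Sum>j\<in>{1..n - 1}. f j)"
    unfolding A_poly_def lookup_sum lookup_single when_def f_def by simp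
  also have "\<dots> = f k + (\<Sum>j\<in>{1..n - 1} - {k}. f j)"
    using k by (simp add: sum.remove)
  also have "\<dots> \<le> f k"
    by (simp add: sum_nonpos f_def)
  also have "f k < 0"
    using assms by (simp add: f_def)
  finally show ?thesis .
qed

lemma lookup_a_poly_antidiagonal_neg:
  assumes "3 \<le> a" "a \<le> n - 1"
  shows "Poly_Mapping.lookup (a_poly n) {#a, n + 2 - a#} < 0"
proof -
  have M: "{#n, a, n + 2 - a#} = {#1 + (a - 1), 1 + n - (a - 1), n#}"
    using assms by (simp add: add_mset_commute)
  have "count {#a, n + 2 - a#} n = 0" using assms by auto
  then have "Poly_Mapping.lookup (a_poly n) {#a, n + 2 - a#}
      = Poly_Mapping.lookup (R_poly (Suc n)) {#n, a, n + 2 - a#}"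
    by (simp add: lookup_a_poly del: R_poly.simps)
  also have "\<dots> = Poly_Mapping.lookup (A_poly n) {#n, a, n + 2 - a#}
      + Poly_Mapping.lookup (L_op (R_poly n)) {#n, a, n + 2 - a#}"
    using assms by (intro lookup_R_poly_Suc_cubic) simp_all
  also have "\<dots> \<le> Poly_Mapping.lookup (A_poly n) {#n, a, n + 2 - a#}"
  proof -
    have "nonpos_int (Poly_Mapping.lookup (L_op (R_poly n)) {#n, a, n + 2 - a#})"
      by (intro nonpos_int_lookup_L_op nonpos_int_lookup_R_poly_cubic) simp
    then show ?thesis by (simp add: nonpos_int_def)
  qed
  also have "\<dots> < 0"
    unfolding M using assms by (intro lookup_A_poly_neg) simp_all
  finally show ?thesis .
qed

lemma polar_form_eq_sum:
  "polar_form p x y = (\<Sum>M\<in>Poly_Mapping.keys p. of_rat (Poly_Mapping.lookup p M) *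
      ((\<Prod>i\<in>#M. x i + y i) - (\<Prod>i\<in>#M. x i) - (\<Prod>i\<in>#M. y i))) / 2"
  unfolding polar_form_def eval_tpoly_def
  by (simp add: sum_subtractf[symmetric] right_diff_distrib)

lemma nondegenerate_on_antidiagonal:
  assumes keys: "\<And>M. M \<in> Poly_Mapping.keys p \<Longrightarrow> \<exists>a\<in>I. M = {#a, s - a#}"
    and coeff: "\<And>a. a \<in> I \<Longrightarrow> Poly_Mapping.lookup p {#a, s - a#} \<noteq> 0"
    and reflect: "\<And>a. a \<in> I \<Longrightarrow> a \<le> s \<and> s - a \<in> I"
  shows "nondegenerate_on I p"
  unfolding nondegenerate_on_def
proof (intro allI impI)
  fix x :: "nat \<Rightarrow> real" and i :: nat
  assume x_supp: "\<forall>i. i \<notin> I \<longrightarrow> x i = 0"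
    and radical: "\<forall>y. (\<forall>i. i \<notin> I \<longrightarrow> y i = 0) \<longrightarrow> polar_form p x y = 0"
  show "x i = 0"
  proof (cases "i \<in> I")
    case False
    with x_supp show ?thesis by blast
  next
    case True
    define j where "j = s - i"
    have j: "j \<in> I" "s - j = i" using reflect[OF True] by (auto simp: j_def)
    define y :: "nat \<Rightarrow> real" where "y k = (if k = j then 1 else 0)" for k
    define g where "g M = of_rat (Poly_Mapping.lookup p M) *
      ((\<Prod>i\<in>#M. x i + y i) - (\<Prod>i\<in>#M. x i) - (\<Prod>i\<in>#M. y i))" for M
    define Mj where "Mj = {#j, i#}"
    have c: "Poly_Mapping.lookup p Mj \<noteq> 0" using coeff[OF j(1)] j(2) by (simp add: Mj_def)
    have g_other: "g M = 0" if M: "M \<in> Poly_Mapping.keys p - {Mj}" for M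
    proof -
      obtain a where a: "a \<in> I" "M = {#a, s - a#}" using keys M by blast
      have "a \<noteq> j" "s - a \<noteq> j"
        using M a reflect[OF a(1)] j by (auto simp: Mj_def add_mset_commute)
      then show ?thesis by (simp add: g_def y_def a(2))
    qed
    have "polar_form p x y = (\<Sum>M\<in>Poly_Mapping.keys p. g M) / 2"
      unfolding polar_form_eq_sum g_def ..
    also have "(\<Sum>M\<in>Poly_Mapping.keys p. g M) = g Mj"
      using c g_other by (simp add: sum.remove[of _ Mj] in_keys_iff sum.neutral)
    finally have "g Mj = 0"
      using radical j(1) by (auto simp: y_def)
    moreover have "g Mj = of_rat (Poly_Mapping.lookup p Mj) * (if i = j then 2 else 1) * x i"
      by (auto simp: g_def Mj_def y_def algebra_simps)
    ultimately show ?thesis using c by (simp split: if_splits)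
  qed
qed

theorem mainTheorem17:
  fixes n :: nat
  assumes "n \<ge> 5"
  shows "(\<forall>m\<in>Poly_Mapping.keys (a_poly n). set_mset m \<subseteq> {3..n-1} \<and> Poly_Mapping.lookup (a_poly n) m \<in> \<int>)
       \<and> (\<forall>m\<in>Poly_Mapping.keys (a_poly n). size m = 2)
       \<and> nondegenerate_on {3..n-1} (a_poly n)"
proof (intro conjI ballI)
  fix M assume "M \<in> Poly_Mapping.keys (a_poly n)"
  then obtain a where "3 \<le> a" "a \<le> n - 1" "M = {#a, n + 2 - a#}" by (rule keys_a_poly)
  then show "set_mset M \<subseteq> {3..n - 1}" and "size M = 2" by auto
  show "Poly_Mapping.lookup (a_poly n) M \<in> \<int>" by (rule lookup_a_poly_Ints)
next
  show "nondegenerate_on {3..n - 1} (a_poly n)"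
  proof (rule nondegenerate_on_antidiagonal)
    fix M assume "M \<in> Poly_Mapping.keys (a_poly n)"
    then show "\<exists>a\<in>{3..n - 1}. M = {#a, n + 2 - a#}" by (metis atLeastAtMost_iff keys_a_poly)
  qed (auto dest: lookup_a_poly_antidiagonal_neg)
qed

end
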